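(* In the setting below, the Markov chain on $(r_{\mathrm{hc}},\infty)^k$ with transition kernel \[P_{\beta,p}(\mathbf z,A)=\frac{1}{\lambda_0(\beta,p)\varphi_{0;\beta,p}(\mathbf z)}\int_AK_{\beta,p}(\mathbf z,\mathbf z')\varphi_{0;\beta,p}(\mathbf z')\mathrm d\mathbf z'\] is geometrically ergodic: with $\pi$ the probability measure with density proportional to $\varphi_{0;\beta,p}(\mathsf s(\mathbf z))\varphi_{0;\beta,p}(\mathbf z)$ (which is invariant for $P_{\beta,p}$), there exist $q\in(0,1)$ and finite constants $C(\mathbf z)$ such that $\|P^n_{\beta,p}(\mathbf z,\cdot)-\pi\|_{\mathsf{TV}}\le C(\mathbf z)q^n$ for all $\mathbf z\in(r_{\mathrm{hc}},\infty)^k$ and $n\in\mathbb{N}$.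
   Context: $v:\mathbb{R}_+\to\mathbb{R}\cup\{\infty\}$ measurable with hard core $r_{\mathrm{hc}}>0$ ($v\equiv\infty$ on $[0,r_{\mathrm{hc}}]$), finite range $R$ ($v\equiv0$ on $[R,\infty)$), finite and bounded from below on $[r_{\mathrm{hc}},R]$; $m\ge2$ an integer with $R<(m+1)r_{\mathrm{hc}}$, $k=m-1$; $\beta,p>0$. For $\mathbf z,\mathbf z'\in(r_{\mathrm{hc}},\infty)^k$: $V_p(\mathbf z)=\sum_{1\le i<j\le k+1}v(z_i+\dots+z_{j-1})+p\sum_iz_i$, $W(\mathbf z;\mathbf z')=\sum_{i=1}^k\sum_{j=1}^kv(z_i+\dots+z_k+z'_1+\dots+z'_j)$, $K_{\beta,p}(\mathbf z,\mathbf z')=\exp(-\beta(\frac12V_p(\mathbf z)+W(\mathbf z;\mathbf z')+\frac12V_p(\mathbf z')))$, and $\mathcal K_{\beta,p}$ the integral operator with kernel $K_{\beta,p}$ on $L^2((r_{\mathrm{hc}},\infty)^k)$. $\lambda_0(\beta,p)>0$ is its dominant (simple) eigenvalue and $\varphi_{0;\beta,p}$ a corresponding strictly positive normalised eigenfunction (given by the Krein–Rutman theorem). $\mathsf s(z_1,\dots,z_k)=(z_k,\dots,z_1)$. *)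

theory Defs
  imports "HOL-Probability.Probability"
begin

text \<open>Points of (r_hc,oo)^k are represented as extensional functions nat => real on
  the index set {..<k} (0-based: z 0, ..., z (k-1) correspond to z_1, ..., z_k).\<close>

definition Lmeas :: "nat \<Rightarrow> (nat \<Rightarrow> real) measure" where
  "Lmeas k = PiM {..<k} (\<lambda>_. lborel)"

definition hcdom :: "nat \<Rightarrow> real \<Rightarrow> (nat \<Rightarrow> real) set" where
  "hcdom k rhc = {z. z \<in> space (Lmeas k) \<and> (\<forall>i<k. rhc < z i)}"

definition srev :: "nat \<Rightarrow> (nat \<Rightarrow> real) \<Rightarrow> (nat \<Rightarrow> real)" where
  "srev k z = (\<lambda>i. if i < k then z (k - 1 - i) else undefined)"

text \<open>V_p(z) = sum_{1<=i<j<=k+1} v(z_i+...+z_{j-1}) + p sum_i z_i (0-based indices).\<close>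
definition Vp :: "(real \<Rightarrow> ereal) \<Rightarrow> real \<Rightarrow> nat \<Rightarrow> (nat \<Rightarrow> real) \<Rightarrow> ereal" where
  "Vp v p k z = (\<Sum>i\<in>{0..k}. \<Sum>j\<in>{i<..k}. v (\<Sum>l\<in>{i..<j}. z l)) + ereal (p * (\<Sum>i<k. z i))"

text \<open>W(z;z') = sum_{i=1}^k sum_{j=1}^k v(z_i+...+z_k+z'_1+...+z'_j) (0-based indices).\<close>
definition Wint :: "(real \<Rightarrow> ereal) \<Rightarrow> nat \<Rightarrow> (nat \<Rightarrow> real) \<Rightarrow> (nat \<Rightarrow> real) \<Rightarrow> ereal" where
  "Wint v k z z' = (\<Sum>i<k. \<Sum>j<k. v ((\<Sum>l\<in>{i..<k}. z l) + (\<Sum>l\<le>j. z' l)))"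

definition boltz :: "ereal \<Rightarrow> real" where
  "boltz e = (if e = \<infinity> then 0 else exp (- real_of_ereal e))"

definition Kker :: "(real \<Rightarrow> ereal) \<Rightarrow> real \<Rightarrow> real \<Rightarrow> nat \<Rightarrow> (nat \<Rightarrow> real) \<Rightarrow> (nat \<Rightarrow> real) \<Rightarrow> real" where
  "Kker v \<beta> p k z z' = boltz (ereal \<beta> * (Vp v p k z / 2 + Wint v k z z' + Vp v p k z' / 2))"

definition is_eigenvalue_K ::
  "(real \<Rightarrow> ereal) \<Rightarrow> real \<Rightarrow> real \<Rightarrow> nat \<Rightarrow> real \<Rightarrow> complex \<Rightarrow> bool" where
  "is_eigenvalue_K v \<beta> p k rhc \<mu> \<longleftrightarrow>
     (\<exists>\<psi> :: (nat \<Rightarrow> real) \<Rightarrow> complex.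
        \<psi> \<in> borel_measurable (Lmeas k) \<and>
        set_integrable (Lmeas k) (hcdom k rhc) (\<lambda>z. (cmod (\<psi> z))\<^sup>2) \<and>
        \<not> (AE z in Lmeas k. z \<in> hcdom k rhc \<longrightarrow> \<psi> z = 0) \<and>
        (AE z in Lmeas k. z \<in> hcdom k rhc \<longrightarrow>
           set_integrable (Lmeas k) (hcdom k rhc) (\<lambda>z'. complex_of_real (Kker v \<beta> p k z z') * \<psi> z') \<and>
           (LINT z':hcdom k rhc|Lmeas k. complex_of_real (Kker v \<beta> p k z z') * \<psi> z') = \<mu> * \<psi> z))"

definition Ptrans :: "(real \<Rightarrow> ereal) \<Rightarrow> real \<Rightarrow> real \<Rightarrow> nat \<Rightarrow> real \<Rightarrow> real
     \<Rightarrow> ((nat \<Rightarrow> real) \<Rightarrow> real) \<Rightarrow> (nat \<Rightarrow> real) \<Rightarrow> (nat \<Rightarrow> real) measure" where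
  "Ptrans v \<beta> p k rhc lam0 \<phi> z = density (Lmeas k)
     (\<lambda>z'. ennreal (indicator (hcdom k rhc) z' * Kker v \<beta> p k z z' * \<phi> z' / (lam0 * \<phi> z)))"

primrec kernel_pow :: "'a measure \<Rightarrow> ('a \<Rightarrow> 'a measure) \<Rightarrow> nat \<Rightarrow> 'a \<Rightarrow> 'a measure" where
  "kernel_pow M P 0 z = return M z"
| "kernel_pow M P (Suc n) z = bind (kernel_pow M P n z) P"

definition pi_meas :: "nat \<Rightarrow> real \<Rightarrow> ((nat \<Rightarrow> real) \<Rightarrow> real) \<Rightarrow> (nat \<Rightarrow> real) measure" where
  "pi_meas k rhc \<phi> = density (Lmeas k)
     (\<lambda>z. ennreal (indicator (hcdom k rhc) z * \<phi> (srev k z) * \<phi> z /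
        (LINT y:hcdom k rhc|Lmeas k. \<phi> (srev k y) * \<phi> y)))"

definition tv_dist :: "'a measure \<Rightarrow> 'a measure \<Rightarrow> real" where
  "tv_dist \<mu> \<nu> = (SUP A \<in> sets \<mu>. \<bar>measure \<mu> A - measure \<nu> A\<bar>)"

end

theory Submission
  imports Defs
begin

text \<open>The kernel factorises as K(z,y) = e(z) exp(-\<beta> W(z,y)) e(y) with e = exp(-\<beta> V_p / 2).
  Since v is bounded below, so is W, and the eigenvalue equation gives lam0 \<phi>(z) \<le> C e(z).
  On the other hand W(z,y) = 0 as soon as the first spacing y_1 is at least R, so
  P(z, dy) \<ge> c e(y) \<phi>(y) 1{y_1 \<ge> R} dy uniformly in z: a Doeblin condition on the whole state
  space, which contracts total variation geometrically. Invariance of \<pi> follows from the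
  reflection symmetry K(z,y) = K(s y, s z). Only positivity, integrability and the eigenvalue
  equation of \<phi> enter.\<close>

section \<open>Doeblin's theorem\<close>

lemma bind_cong_AE_set:
  assumes sets_M: "sets M = sets N" and M_nonempty: "space M \<noteq> {}"
    and g: "g \<in> measurable N (subprob_algebra N)"
    and sets_f: "\<And>x. sets (f x) = sets N"
    and U: "U \<in> sets N" and AE_U: "AE x in M. x \<in> U"
    and f_eq_g: "\<And>x. x \<in> U \<Longrightarrow> f x = g x"
    and f_outside: "\<And>x. x \<in> space N \<Longrightarrow> x \<notin> U \<Longrightarrow> f x \<notin> space (subprob_algebra N)"
  shows "bind M f = bind M g"
proof -
  have g_M: "g \<in> measurable M (subprob_algebra N)"
    using g by (simp add: measurable_cong_sets[OF sets_M refl])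
  have space_M: "space M = space N" using sets_M sets_eq_imp_space_eq by blast
  let ?x = "SOME x. x \<in> space M"
  have "?x \<in> space M" using M_nonempty by (simp add: some_in_eq)
  then have sets_g: "sets (g ?x) = sets N" using sets_kernel[OF g] space_M by auto
  \<comment> \<open>f need not be a kernel, but outside U its values leave the subprobability algebra, so f and g
     have the same preimages of measurable sets up to the M-null set outside U.\<close>
  have "distr M (subprob_algebra N) f = distr M (subprob_algebra N) g"
    unfolding distr_def
  proof (rule measure_of_eq)
    show "sets (subprob_algebra N) \<subseteq> Pow (space (subprob_algebra N))"
      using sets.space_closed by blast
    fix a assume "a \<in> sigma_sets (space (subprob_algebra N)) (sets (subprob_algebra N))"
    then have a: "a \<in> sets (subprob_algebra N)" by (simp add: sets.sigma_sets_eq)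
    have a_space: "a \<subseteq> space (subprob_algebra N)" using a sets.sets_into_space by blast
    have preimage: "f -` a \<inter> space M = (g -` a \<inter> space M) \<inter> U"
      using space_M by (auto; metis f_eq_g f_outside a_space subsetD)
    have g_a: "g -` a \<inter> space M \<in> sets M" using measurable_sets[OF g_M a] .
    show "emeasure M (f -` a \<inter> space M) = emeasure M (g -` a \<inter> space M)"
      unfolding preimage
      by (rule emeasure_eq_AE, rule AE_mp[OF AE_U]) (use g_a U sets_M in \<open>auto intro!: AE_I2\<close>)
  qed
  moreover have "subprob_algebra (f ?x) = subprob_algebra N" "subprob_algebra (g ?x) = subprob_algebra N"
    using sets_f sets_g by (auto intro: subprob_algebra_cong)
  ultimately show ?thesis unfolding bind_def using M_nonempty by simp
qed

locale doeblin =
  fixes N :: "'a measure" and S :: "'a set" and Q :: "'a \<Rightarrow> 'a measure"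
    and \<nu> :: "'a measure" and \<epsilon> :: real
  assumes S_sets[measurable]: "S \<in> sets N"
    and Q_measurable[measurable]: "Q \<in> measurable N (subprob_algebra N)"
    and prob_space_Q: "\<And>y. y \<in> S \<Longrightarrow> prob_space (Q y)"
    and Q_outside_S: "\<And>y. y \<in> S \<Longrightarrow> emeasure (Q y) (space N - S) = 0"
    and prob_space_\<nu>: "prob_space \<nu>" and sets_\<nu>: "sets \<nu> = sets N"
    and \<epsilon>_pos: "0 < \<epsilon>" and \<epsilon>_less_1: "\<epsilon> < 1"
    and minorization: "\<And>y A. y \<in> S \<Longrightarrow> A \<in> sets N \<Longrightarrow> ennreal \<epsilon> * emeasure \<nu> A \<le> emeasure (Q y) A"
begin

lemma S_subset_space: "S \<subseteq> space N"
  using S_sets sets.sets_into_space by blast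

lemma sets_Q: "x \<in> space N \<Longrightarrow> sets (Q x) = sets N"
  using sets_kernel[OF Q_measurable] by blast

lemma space_Q: "x \<in> space N \<Longrightarrow> space (Q x) = space N"
  using sets_Q sets_eq_imp_space_eq by blast

lemma space_\<nu>: "space \<nu> = space N"
  using sets_\<nu> sets_eq_imp_space_eq by blast

lemma AE_Q_in_S: assumes "y \<in> S" shows "AE z in Q y. z \<in> S"
proof (rule AE_I')
  show "space N - S \<in> null_sets (Q y)"
    using Q_outside_S[OF assms] sets_Q assms S_subset_space by (auto simp: null_sets_def)
qed (use space_Q assms S_subset_space in auto)

lemma measurable_kernel_pow[measurable]: "kernel_pow N Q n \<in> measurable N (subprob_algebra N)"
  by (induction n) (simp_all add: return_measurable measurable_bind2[OF _ Q_measurable])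

lemma sets_kernel_pow: "x \<in> space N \<Longrightarrow> sets (kernel_pow N Q n x) = sets N"
  using sets_kernel[OF measurable_kernel_pow] by blast

lemma space_kernel_pow: "x \<in> space N \<Longrightarrow> space (kernel_pow N Q n x) = space N"
  using sets_kernel_pow sets_eq_imp_space_eq by blast

lemma measurable_kernel_pow_cong:
  "x \<in> space N \<Longrightarrow> f \<in> measurable N M \<Longrightarrow> f \<in> measurable (kernel_pow N Q n x) M"
  by (simp add: measurable_cong_sets[OF sets_kernel_pow refl])

lemma prob_space_kernel_pow_AE_in_S:
  assumes "x \<in> S"
  shows "prob_space (kernel_pow N Q n x) \<and> (AE z in kernel_pow N Q n x. z \<in> S)"
proof (induction n)
  case 0
  have x: "x \<in> space N" using assms S_subset_space by auto
  have "Measurable.pred N (\<lambda>z. z \<in> S)" by measurable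
  then show ?case using assms
    unfolding kernel_pow.simps by (simp add: prob_space_return[OF x] AE_return[OF x])
next
  case (Suc n)
  let ?M = "kernel_pow N Q n x"
  interpret M: prob_space ?M using Suc by auto
  have "x \<in> space N" using assms S_subset_space by auto
  then have Q_M: "Q \<in> measurable ?M (subprob_algebra N)"
    by (simp add: measurable_cong_sets[OF sets_kernel_pow refl])
  have AE_M: "AE y in ?M. y \<in> S" using Suc by auto
  have "prob_space (?M \<bind> Q)"
    by (rule M.prob_space_bind[OF _ Q_M]) (use AE_M prob_space_Q in auto)
  moreover have "AE z in ?M \<bind> Q. z \<in> S"
    by (subst AE_bind[OF Q_M]) (use AE_M AE_Q_in_S in \<open>auto elim: AE_mp\<close>)
  ultimately show ?case unfolding kernel_pow.simps ..
qed

lemma integrable_Q: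
  fixes f :: "'a \<Rightarrow> real"
  assumes y: "y \<in> S" and f: "f \<in> borel_measurable N"
    and f01: "\<And>z. z \<in> space N \<Longrightarrow> 0 \<le> f z \<and> f z \<le> 1"
  shows "integrable (Q y) f"
proof -
  have yN: "y \<in> space N" using y S_subset_space by auto
  interpret Qy: prob_space "Q y" using prob_space_Q y .
  show ?thesis
    by (rule Qy.integrable_const_bound[where B=1])
      (use f f01 space_Q[OF yN] in \<open>auto intro!: AE_I2 simp: measurable_cong_sets[OF sets_Q[OF yN] refl]\<close>)
qed

lemma integral_Q_unit_interval:
  fixes f :: "'a \<Rightarrow> real"
  assumes y: "y \<in> S" and f: "f \<in> borel_measurable N"
    and f01: "\<And>z. z \<in> space N \<Longrightarrow> 0 \<le> f z \<and> f z \<le> 1"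
  shows "0 \<le> (\<integral>z. f z \<partial>Q y) \<and> (\<integral>z. f z \<partial>Q y) \<le> 1"
proof -
  have yN: "y \<in> space N" using y S_subset_space by auto
  interpret Qy: prob_space "Q y" using prob_space_Q y .
  show ?thesis using integrable_Q[OF y f f01] f01 space_Q[OF yN]
    by (auto intro!: Qy.integral_ge_const Qy.integral_le_const AE_I2)
qed

lemma integral_Q_minorized:
  fixes f :: "'a \<Rightarrow> real"
  assumes y: "y \<in> S" and f[measurable]: "f \<in> borel_measurable N"
    and f01: "\<And>z. z \<in> space N \<Longrightarrow> 0 \<le> f z \<and> f z \<le> 1"
  shows "\<epsilon> * (\<integral>z. f z \<partial>\<nu>) \<le> (\<integral>z. f z \<partial>Q y)"
proof -
  have yN: "y \<in> space N" using y S_subset_space by auto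
  interpret Qy: prob_space "Q y" using prob_space_Q y .
  have f_Q: "f \<in> borel_measurable (Q y)" by (simp add: measurable_cong_sets[OF sets_Q[OF yN] refl])
  have f_\<nu>: "f \<in> borel_measurable \<nu>" by (simp add: measurable_cong_sets[OF sets_\<nu> refl])
  have "ennreal \<epsilon> * emeasure \<nu> A \<le> emeasure (Q y) A" for A
    using minorization[OF y, of A] by (cases "A \<in> sets N") (auto simp: emeasure_notin_sets sets_\<nu>)
  then have "scale_measure (ennreal \<epsilon>) \<nu> \<le> Q y"
    by (simp add: le_measure_iff sets_Q[OF yN] space_Q[OF yN] sets_\<nu> space_\<nu> le_fun_def
        space_scale_measure sets_scale_measure)
  then have "(\<integral>\<^sup>+z. ennreal (f z) \<partial>scale_measure (ennreal \<epsilon>) \<nu>) \<le> (\<integral>\<^sup>+z. ennreal (f z) \<partial>Q y)"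
    by (rule nn_integral_mono_measure[rotated]) (simp add: sets_\<nu> sets_Q[OF yN])
  then have le: "ennreal \<epsilon> * (\<integral>\<^sup>+z. ennreal (f z) \<partial>\<nu>) \<le> (\<integral>\<^sup>+z. ennreal (f z) \<partial>Q y)"
    using f_\<nu> by (simp add: nn_integral_scale_measure)
  have "(\<integral>\<^sup>+z. ennreal (f z) \<partial>Q y) \<le> (\<integral>\<^sup>+z. 1 \<partial>Q y)"
    by (rule nn_integral_mono) (use f01 space_Q[OF yN] in auto)
  then have finite: "(\<integral>\<^sup>+z. ennreal (f z) \<partial>Q y) < top"
    by (simp add: Qy.emeasure_space_1 order_le_less_trans)
  have int_\<nu>: "(\<integral>z. f z \<partial>\<nu>) = enn2real (\<integral>\<^sup>+z. ennreal (f z) \<partial>\<nu>)"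
    by (rule integral_eq_nn_integral[OF f_\<nu>]) (use f01 space_\<nu> in \<open>auto intro!: AE_I2\<close>)
  have int_Q: "(\<integral>z. f z \<partial>Q y) = enn2real (\<integral>\<^sup>+z. ennreal (f z) \<partial>Q y)"
    by (rule integral_eq_nn_integral[OF f_Q]) (use f01 space_Q[OF yN] in \<open>auto intro!: AE_I2\<close>)
  have "\<epsilon> * (\<integral>z. f z \<partial>\<nu>) = enn2real (ennreal \<epsilon> * (\<integral>\<^sup>+z. ennreal (f z) \<partial>\<nu>))"
    using \<epsilon>_pos by (simp add: int_\<nu> enn2real_mult)
  also have "\<dots> \<le> (\<integral>z. f z \<partial>Q y)"
    unfolding int_Q by (rule enn2real_mono[OF le finite])
  finally show ?thesis .
qed

lemma integral_Q_residual_bounds: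
  fixes f :: "'a \<Rightarrow> real"
  assumes y: "y \<in> S" and f[measurable]: "f \<in> borel_measurable N"
    and f01: "\<And>z. z \<in> space N \<Longrightarrow> 0 \<le> f z \<and> f z \<le> 1"
  shows "0 \<le> (\<integral>z. f z \<partial>Q y) - \<epsilon> * (\<integral>z. f z \<partial>\<nu>)"
    and "(\<integral>z. f z \<partial>Q y) - \<epsilon> * (\<integral>z. f z \<partial>\<nu>) \<le> 1 - \<epsilon>"
proof -
  interpret Qy: prob_space "Q y" using prob_space_Q y .
  interpret \<nu>: prob_space \<nu> by (rule prob_space_\<nu>)
  have f_Q: "integrable (Q y) f" by (rule integrable_Q[OF y f f01])
  have f_\<nu>: "integrable \<nu> f"
    by (rule \<nu>.integrable_const_bound[where B=1])
      (use f01 space_\<nu> in \<open>auto intro!: AE_I2 simp: measurable_cong_sets[OF sets_\<nu> refl]\<close>)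
  show "0 \<le> (\<integral>z. f z \<partial>Q y) - \<epsilon> * (\<integral>z. f z \<partial>\<nu>)"
    using integral_Q_minorized[OF y f f01] by simp
  have "\<epsilon> * (\<integral>z. 1 - f z \<partial>\<nu>) \<le> (\<integral>z. 1 - f z \<partial>Q y)"
    by (rule integral_Q_minorized[OF y]) (use f01 in auto)
  then show "(\<integral>z. f z \<partial>Q y) - \<epsilon> * (\<integral>z. f z \<partial>\<nu>) \<le> 1 - \<epsilon>"
    using f_Q f_\<nu> by (simp add: Qy.prob_space \<nu>.prob_space algebra_simps)
qed

lemma borel_measurable_integral_Q:
  fixes f :: "'a \<Rightarrow> real"
  shows "f \<in> borel_measurable N \<Longrightarrow> (\<lambda>y. \<integral>z. f z \<partial>Q y) \<in> borel_measurable N"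
  by (rule measurable_compose[OF Q_measurable integral_measurable_subprob_algebra])

lemma borel_measurable_integral_kernel_pow:
  fixes f :: "'a \<Rightarrow> real"
  shows "f \<in> borel_measurable N \<Longrightarrow> (\<lambda>y. \<integral>z. f z \<partial>kernel_pow N Q n y) \<in> borel_measurable N"
  by (rule measurable_compose[OF measurable_kernel_pow integral_measurable_subprob_algebra])

lemma integral_bind_Q:
  fixes f :: "'a \<Rightarrow> real"
  assumes M: "finite_measure M" "sets M = sets N"
    and f: "f \<in> borel_measurable N" and f_bounded: "\<And>z. z \<in> space N \<Longrightarrow> \<bar>f z\<bar> \<le> 1"
  shows "(\<integral>z. f z \<partial>(M \<bind> Q)) = (\<integral>y. (\<integral>z. f z \<partial>Q y) \<partial>M)"
proof (rule integral_bind[OF f f_bounded _ M(1)])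
  show Q_M: "Q \<in> measurable M (subprob_algebra N)"
    using Q_measurable by (simp add: measurable_cong_sets[OF M(2) refl])
  show "AE x in M. emeasure (Q x) (space (Q x)) \<le> ennreal 1"
    using subprob_space_kernel[OF Q_M] by (auto intro!: AE_I2 subprob_space.subprob_emeasure_le_1)
qed

lemma integral_kernel_pow_Suc:
  fixes f h :: "'a \<Rightarrow> real"
  assumes x: "x \<in> S" and f: "f \<in> borel_measurable N"
    and f_bounded: "\<And>z. z \<in> space N \<Longrightarrow> \<bar>f z\<bar> \<le> 1"
    and h: "h \<in> borel_measurable N" and h_eq: "\<And>y. y \<in> S \<Longrightarrow> (\<integral>z. f z \<partial>Q y) = h y"
  shows "(\<integral>z. f z \<partial>kernel_pow N Q (Suc n) x) = (\<integral>y. h y \<partial>kernel_pow N Q n x)"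
proof -
  let ?M = "kernel_pow N Q n x"
  have xN: "x \<in> space N" using x S_subset_space by auto
  interpret M: prob_space ?M using prob_space_kernel_pow_AE_in_S[OF x] by auto
  have "(\<integral>z. f z \<partial>kernel_pow N Q (Suc n) x) = (\<integral>y. (\<integral>z. f z \<partial>Q y) \<partial>?M)"
    using integral_bind_Q[OF M.finite_measure_axioms sets_kernel_pow[OF xN] f f_bounded] by simp
  also have "\<dots> = (\<integral>y. h y \<partial>?M)"
  proof (rule integral_cong_AE)
    show "(\<lambda>y. \<integral>z. f z \<partial>Q y) \<in> borel_measurable ?M"
      using borel_measurable_integral_Q[OF f] by (rule measurable_kernel_pow_cong[OF xN])
    show "h \<in> borel_measurable ?M" using h by (rule measurable_kernel_pow_cong[OF xN])
    have "AE y in ?M. y \<in> S" using prob_space_kernel_pow_AE_in_S[OF x] by blast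
    then show "AE y in ?M. (\<integral>z. f z \<partial>Q y) = h y" by (rule AE_mp) (auto intro!: AE_I2 h_eq)
  qed
  finally show ?thesis .
qed

text \<open>Coupling: the minorising part is common to all starting points, so each step contracts the
  oscillation of integrals by the factor 1 - \<epsilon>.\<close>

lemma kernel_pow_oscillation:
  fixes f :: "'a \<Rightarrow> real"
  assumes "f \<in> borel_measurable N" "\<And>z. z \<in> space N \<Longrightarrow> 0 \<le> f z \<and> f z \<le> 1"
    and "x \<in> S" "x' \<in> S"
  shows "\<bar>(\<integral>z. f z \<partial>kernel_pow N Q n x) - (\<integral>z. f z \<partial>kernel_pow N Q n x')\<bar> \<le> (1 - \<epsilon>) ^ n"
  using assms
proof (induction n arbitrary: f)
  case 0
  then have "x \<in> space N" "x' \<in> space N" using S_subset_space by auto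
  moreover from this have "(\<integral>z. f z \<partial>kernel_pow N Q 0 x) = f x" "(\<integral>z. f z \<partial>kernel_pow N Q 0 x') = f x'"
    using 0(1) by (simp_all add: integral_return)
  ultimately show ?case using 0(2)[of x] 0(2)[of x'] by (simp add: abs_le_iff)
next
  case (Suc n)
  note f = Suc.prems(1) and f01 = Suc.prems(2)
  define c where "c = \<epsilon> * (\<integral>z. f z \<partial>\<nu>)"
  define g where "g y = (if y \<in> S then ((\<integral>z. f z \<partial>Q y) - c) / (1 - \<epsilon>) else 0)" for y
  have g[measurable]: "g \<in> borel_measurable N"
    unfolding g_def using borel_measurable_integral_Q[OF f] by measurable
  have g01: "0 \<le> g y \<and> g y \<le> 1" for y
    using integral_Q_residual_bounds[OF _ f f01, of y] \<epsilon>_less_1 unfolding g_def c_def by auto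
  have step: "(\<integral>z. f z \<partial>kernel_pow N Q (Suc n) y) = c + (1 - \<epsilon>) * (\<integral>z. g z \<partial>kernel_pow N Q n y)"
    if y: "y \<in> S" for y
  proof -
    have yN: "y \<in> space N" using y S_subset_space by auto
    interpret M: prob_space "kernel_pow N Q n y" using prob_space_kernel_pow_AE_in_S[OF y] by auto
    have "integrable (kernel_pow N Q n y) g"
      by (rule M.integrable_const_bound[where B=1])
        (use g01 measurable_kernel_pow_cong[OF yN g] in \<open>auto intro!: AE_I2\<close>)
    moreover have h: "(\<lambda>z. c + (1 - \<epsilon>) * g z) \<in> borel_measurable N" by measurable
    have "(\<integral>z. f z \<partial>kernel_pow N Q (Suc n) y) = (\<integral>z. c + (1 - \<epsilon>) * g z \<partial>kernel_pow N Q n y)"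
      by (rule integral_kernel_pow_Suc[OF y f _ h]) (use f01 \<epsilon>_less_1 in \<open>auto simp: g_def\<close>)
    ultimately show ?thesis by (simp add: M.prob_space)
  qed
  have "\<bar>(\<integral>z. g z \<partial>kernel_pow N Q n x) - (\<integral>z. g z \<partial>kernel_pow N Q n x')\<bar> \<le> (1 - \<epsilon>) ^ n"
    by (rule Suc.IH[OF g]) (use g01 Suc.prems in auto)
  then show ?case
    unfolding step[OF Suc.prems(3)] step[OF Suc.prems(4)] using \<epsilon>_less_1
    by (simp add: right_diff_distrib[symmetric] abs_mult mult_left_mono)
qed

end

locale doeblin_invariant = doeblin +
  fixes \<pi> :: "'a measure"
  assumes prob_space_\<pi>: "prob_space \<pi>" and sets_\<pi>: "sets \<pi> = sets N"
    and AE_\<pi>_in_S: "AE x in \<pi>. x \<in> S" and bind_\<pi>_Q: "\<pi> \<bind> Q = \<pi>"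
begin

lemma measurable_\<pi>_cong: "f \<in> measurable N M \<Longrightarrow> f \<in> measurable \<pi> M"
  by (simp add: measurable_cong_sets[OF sets_\<pi> refl])

lemma integral_kernel_pow_invariant:
  fixes f :: "'a \<Rightarrow> real"
  assumes "f \<in> borel_measurable N" "\<And>z. z \<in> space N \<Longrightarrow> 0 \<le> f z \<and> f z \<le> 1"
  shows "(\<integral>x. (\<integral>z. f z \<partial>kernel_pow N Q n x) \<partial>\<pi>) = (\<integral>x. f x \<partial>\<pi>)"
  using assms
proof (induction n arbitrary: f)
  case 0
  have "space \<pi> = space N" using sets_\<pi> sets_eq_imp_space_eq by blast
  then show ?case using 0 by (intro Bochner_Integration.integral_cong) (auto simp: integral_return)
next
  case (Suc n)
  note f = Suc.prems(1) and f01 = Suc.prems(2)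
  interpret \<pi>: prob_space \<pi> by (rule prob_space_\<pi>)
  define h where "h y = (if y \<in> S then \<integral>z. f z \<partial>Q y else 0)" for y
  have h[measurable]: "h \<in> borel_measurable N"
    unfolding h_def using borel_measurable_integral_Q[OF f] by measurable
  have h01: "0 \<le> h y \<and> h y \<le> 1" for y
    using integral_Q_unit_interval[OF _ f f01, of y] by (simp add: h_def)
  have "(\<integral>x. (\<integral>z. f z \<partial>kernel_pow N Q (Suc n) x) \<partial>\<pi>) = (\<integral>x. (\<integral>z. h z \<partial>kernel_pow N Q n x) \<partial>\<pi>)"
  proof (rule integral_cong_AE)
    show "(\<lambda>x. \<integral>z. f z \<partial>kernel_pow N Q (Suc n) x) \<in> borel_measurable \<pi>"
      "(\<lambda>x. \<integral>z. h z \<partial>kernel_pow N Q n x) \<in> borel_measurable \<pi>"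
      using f h by (auto intro!: measurable_\<pi>_cong borel_measurable_integral_kernel_pow)
    have step: "(\<integral>z. f z \<partial>kernel_pow N Q (Suc n) x) = (\<integral>z. h z \<partial>kernel_pow N Q n x)" if "x \<in> S" for x
      by (rule integral_kernel_pow_Suc[OF that f _ h]) (use f01 in \<open>auto simp: h_def\<close>)
    show "AE x in \<pi>. (\<integral>z. f z \<partial>kernel_pow N Q (Suc n) x) = (\<integral>z. h z \<partial>kernel_pow N Q n x)"
      using AE_\<pi>_in_S by (rule AE_mp) (use step in \<open>auto intro!: AE_I2 simp del: kernel_pow.simps\<close>)
  qed
  also have "\<dots> = (\<integral>x. h x \<partial>\<pi>)" by (rule Suc.IH[OF h h01])
  also have "\<dots> = (\<integral>x. (\<integral>z. f z \<partial>Q x) \<partial>\<pi>)"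
  proof (rule integral_cong_AE)
    show "h \<in> borel_measurable \<pi>" "(\<lambda>x. \<integral>z. f z \<partial>Q x) \<in> borel_measurable \<pi>"
      using h borel_measurable_integral_Q[OF f] by (auto intro: measurable_\<pi>_cong)
    show "AE x in \<pi>. h x = (\<integral>z. f z \<partial>Q x)"
      using AE_\<pi>_in_S by (rule AE_mp) (auto intro!: AE_I2 simp: h_def)
  qed
  also have "\<dots> = (\<integral>x. f x \<partial>\<pi>)"
    using integral_bind_Q[OF \<pi>.finite_measure_axioms sets_\<pi> f] f01 bind_\<pi>_Q by simp
  finally show ?case .
qed

lemma measure_kernel_pow_diff_le:
  assumes x: "x \<in> S" and A: "A \<in> sets N"
  shows "\<bar>measure (kernel_pow N Q n x) A - measure \<pi> A\<bar> \<le> (1 - \<epsilon>) ^ n"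
proof -
  interpret \<pi>: prob_space \<pi> by (rule prob_space_\<pi>)
  define F :: "'a \<Rightarrow> real" where "F y = (\<integral>z. indicator A z \<partial>kernel_pow N Q n y)" for y
  have ind: "(indicator A :: 'a \<Rightarrow> real) \<in> borel_measurable N" "\<And>z. 0 \<le> (indicator A z :: real) \<and> indicator A z \<le> (1::real)"
    using A by (auto simp: indicator_def)
  have F: "F \<in> borel_measurable \<pi>"
    unfolding F_def by (rule measurable_\<pi>_cong, rule borel_measurable_integral_kernel_pow, rule ind(1))
  have osc_S: "\<bar>F x - F y\<bar> \<le> (1 - \<epsilon>) ^ n" if "y \<in> S" for y
    unfolding F_def by (rule kernel_pow_oscillation[OF ind x that])
  have osc: "AE y in \<pi>. F x - (1 - \<epsilon>) ^ n \<le> F y \<and> F y \<le> F x + (1 - \<epsilon>) ^ n"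
    using AE_\<pi>_in_S by (rule AE_mp) (auto intro!: AE_I2 dest!: osc_S simp: abs_le_iff)
  then have "AE y in \<pi>. norm (F y) \<le> \<bar>F x\<bar> + (1 - \<epsilon>) ^ n" by (rule AE_mp) (auto intro!: AE_I2)
  then have F_int: "integrable \<pi> F" by (rule \<pi>.integrable_const_bound[OF _ F])
  have "F x - (1 - \<epsilon>) ^ n \<le> (\<integral>y. F y \<partial>\<pi>)" "(\<integral>y. F y \<partial>\<pi>) \<le> F x + (1 - \<epsilon>) ^ n"
    using osc by (auto intro!: \<pi>.integral_ge_const \<pi>.integral_le_const F_int elim: AE_mp)
  moreover have "measure \<pi> A = (\<integral>y. F y \<partial>\<pi>)"
    using integral_kernel_pow_invariant[OF ind, of n] A sets_\<pi> by (simp add: F_def)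
  moreover have "measure (kernel_pow N Q n x) A = F x"
    using A x S_subset_space sets.sets_into_space by (auto simp: F_def space_kernel_pow Int_absorb2)
  ultimately show ?thesis by (simp add: abs_le_iff)
qed

lemma tv_dist_kernel_pow_le:
  assumes x: "x \<in> S"
  shows "tv_dist (kernel_pow N Q n x) \<pi> \<le> (1 - \<epsilon>) ^ n"
  unfolding tv_dist_def
proof (rule cSUP_least)
  show "sets (kernel_pow N Q n x) \<noteq> {}" using sets.empty_sets by blast
  have "x \<in> space N" using x S_subset_space by auto
  then show "\<bar>measure (kernel_pow N Q n x) A - measure \<pi> A\<bar> \<le> (1 - \<epsilon>) ^ n"
    if "A \<in> sets (kernel_pow N Q n x)" for A
    using that by (intro measure_kernel_pow_diff_le[OF x]) (simp add: sets_kernel_pow)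
qed

end

section \<open>Reflection symmetry\<close>

lemma sum_srev_atLeastLessThan:
  assumes "b \<le> k"
  shows "(\<Sum>l\<in>{a..<b}. srev k z l) = (\<Sum>l\<in>{k - b..<k - a}. z l)"
proof -
  have "(\<Sum>l\<in>{a..<b}. srev k z l) = (\<Sum>l\<in>{a..<b}. z (k - 1 - l))"
    using assms by (intro sum.cong) (auto simp: srev_def)
  also have "\<dots> = (\<Sum>l\<in>{k - b..<k - a}. z l)"
    by (rule sum.reindex_bij_witness[of _ "\<lambda>l. k - 1 - l" "\<lambda>l. k - 1 - l"]) (use assms in auto)
  finally show ?thesis .
qed

lemma sum_srev_lessThan: "(\<Sum>i<k. srev k z i) = (\<Sum>i<k. z i)"
  using sum_srev_atLeastLessThan[where a = 0 and b = k and k = k and z = z] by (simp add: atLeast0LessThan)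

lemma Vp_srev: "Vp v p k (srev k z) = Vp v p k z"
proof -
  define F where "F i j = v (\<Sum>l\<in>{i..<j}. z l)" for i j
  let ?I = "Sigma {0..k} (\<lambda>i. {i<..k})"
  have "(\<Sum>i\<in>{0..k}. \<Sum>j\<in>{i<..k}. v (\<Sum>l\<in>{i..<j}. srev k z l)) = (\<Sum>(i, j)\<in>?I. F (k - j) (k - i))"
    by (subst sum.Sigma[symmetric]) (auto simp: F_def sum_srev_atLeastLessThan intro!: sum.cong)
  also have "\<dots> = (\<Sum>(i, j)\<in>?I. F i j)"
    by (rule sum.reindex_bij_witness[of _ "\<lambda>(i, j). (k - j, k - i)" "\<lambda>(i, j). (k - j, k - i)"]) auto
  also have "\<dots> = (\<Sum>i\<in>{0..k}. \<Sum>j\<in>{i<..k}. v (\<Sum>l\<in>{i..<j}. z l))"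
    by (subst sum.Sigma[symmetric]) (auto simp: F_def)
  finally show ?thesis unfolding Vp_def sum_srev_lessThan by simp
qed

lemma Wint_srev: "Wint v k (srev k z') (srev k z) = Wint v k z z'"
proof -
  define G where "G i j = v ((\<Sum>l\<in>{i..<k}. z l) + (\<Sum>l\<le>j. z' l))" for i j
  have term_srev: "v ((\<Sum>l\<in>{i..<k}. srev k z' l) + (\<Sum>l\<le>j. srev k z l)) = G (k - Suc j) (k - Suc i)"
    if "i < k" "j < k" for i j
  proof -
    have "(\<Sum>l\<in>{i..<k}. srev k z' l) = (\<Sum>l\<in>{k - k..<k - i}. z' l)"
      by (rule sum_srev_atLeastLessThan) simp
    also have "{k - k..<k - i} = {..k - Suc i}" using that by auto
    finally have 1: "(\<Sum>l\<in>{i..<k}. srev k z' l) = (\<Sum>l\<le>k - Suc i. z' l)" .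
    have "{..j} = {0..<Suc j}" by auto
    then have 2: "(\<Sum>l\<le>j. srev k z l) = (\<Sum>l\<in>{k - Suc j..<k}. z l)"
      using sum_srev_atLeastLessThan[where a = 0 and b = "Suc j" and k = k and z = z] that by simp
    show ?thesis unfolding 1 2 G_def by (simp add: add.commute)
  qed
  have "Wint v k (srev k z') (srev k z) = (\<Sum>i<k. \<Sum>j<k. G (k - Suc j) (k - Suc i))"
    unfolding Wint_def by (intro sum.cong refl) (simp add: term_srev)
  also have "\<dots> = (\<Sum>j<k. \<Sum>i<k. G (k - Suc j) (k - Suc i))" by (rule sum.swap)
  also have "\<dots> = (\<Sum>j<k. \<Sum>i<k. G (k - Suc j) i)"
    using sum.nat_diff_reindex[of "G (k - Suc _)" k] by simp
  also have "\<dots> = (\<Sum>j<k. \<Sum>i<k. G j i)"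
    by (rule sum.nat_diff_reindex[where g = "\<lambda>j. \<Sum>i<k. G j i"])
  also have "\<dots> = Wint v k z z'" unfolding Wint_def G_def ..
  finally show ?thesis .
qed

lemma Kker_srev: "Kker v \<beta> p k (srev k z') (srev k z) = Kker v \<beta> p k z z'"
  unfolding Kker_def Vp_srev Wint_srev by (simp add: ac_simps)

lemma space_Lmeas: "space (Lmeas k) = PiE {..<k} (\<lambda>_. UNIV)"
  by (simp add: Lmeas_def space_PiM)

lemma sets_hcdom[measurable]: "hcdom k rhc \<in> sets (Lmeas k)"
proof -
  have "hcdom k rhc = PiE {..<k} (\<lambda>_. {rhc<..})"
    unfolding hcdom_def space_Lmeas by (simp add: PiE_iff set_eq_iff) blast
  then show ?thesis unfolding Lmeas_def by (auto intro: sets_PiM_I_finite)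
qed

lemma srev_in_space: "z \<in> space (Lmeas k) \<Longrightarrow> srev k z \<in> space (Lmeas k)"
  unfolding space_Lmeas srev_def by (simp add: PiE_iff extensional_def)

lemma srev_in_hcdom_iff:
  assumes "z \<in> space (Lmeas k)"
  shows "srev k z \<in> hcdom k rhc \<longleftrightarrow> z \<in> hcdom k rhc"
proof -
  have "(\<forall>i<k. rhc < z (k - 1 - i)) \<longleftrightarrow> (\<forall>i<k. rhc < z i)"
  proof safe
    fix i assume reflected: "\<forall>i<k. rhc < z (k - 1 - i)" and "i < k"
    then have "k - 1 - (k - 1 - i) = i" "k - 1 - i < k" by auto
    then show "rhc < z i" using reflected by metis
  qed simp
  then show ?thesis
    using assms srev_in_space[OF assms] unfolding hcdom_def by (simp add: srev_def)
qed

lemma measurable_srev[measurable]: "srev k \<in> measurable (Lmeas k) (Lmeas k)"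
  unfolding Lmeas_def srev_def
  by (rule measurable_PiM_single')
    (auto intro: measurable_component_singleton simp: PiE_iff extensional_def)

lemma srev_vimage_PiE:
  "srev k -` PiE {..<k} A \<inter> space (Lmeas k) = PiE {..<k} (\<lambda>i. A (k - Suc i))"
proof (intro set_eqI iffI)
  fix x assume "x \<in> srev k -` PiE {..<k} A \<inter> space (Lmeas k)"
  then have x: "x \<in> extensional {..<k}" "\<And>i. i < k \<Longrightarrow> x (k - 1 - i) \<in> A i"
    by (simp_all add: srev_def PiE_iff space_Lmeas)
  have "x i \<in> A (k - Suc i)" if "i < k" for i
    using x(2)[of "k - Suc i"] that by (simp add: Suc_diff_Suc)
  then show "x \<in> PiE {..<k} (\<lambda>i. A (k - Suc i))" using x(1) by (simp add: PiE_iff)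
next
  fix x assume "x \<in> PiE {..<k} (\<lambda>i. A (k - Suc i))"
  then have x: "x \<in> extensional {..<k}" "\<And>i. i < k \<Longrightarrow> x i \<in> A (k - Suc i)"
    by (simp_all add: PiE_iff)
  have "x (k - 1 - i) \<in> A i" if "i < k" for i
    using x(2)[of "k - 1 - i"] that by (simp add: Suc_diff_Suc)
  then show "x \<in> srev k -` PiE {..<k} A \<inter> space (Lmeas k)"
    using x(1) by (simp add: srev_def PiE_iff extensional_def space_Lmeas)
qed

lemma distr_srev: "distr (Lmeas k) (Lmeas k) (srev k) = Lmeas k"
proof -
  interpret product_sigma_finite "\<lambda>_. lborel :: real measure" by standard
  have "distr (Lmeas k) (Lmeas k) (srev k) = PiM {..<k} (\<lambda>_. lborel)"
  proof (rule PiM_eqI)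
    fix A :: "nat \<Rightarrow> real set" assume A: "\<And>i. i \<in> {..<k} \<Longrightarrow> A i \<in> sets lborel"
    have "emeasure (distr (Lmeas k) (Lmeas k) (srev k)) (PiE {..<k} A)
        = emeasure (Lmeas k) (PiE {..<k} (\<lambda>i. A (k - Suc i)))"
      unfolding srev_vimage_PiE[symmetric] using A
      by (intro emeasure_distr[OF measurable_srev]) (auto simp: Lmeas_def intro: sets_PiM_I_finite)
    also have "\<dots> = (\<Prod>i<k. emeasure lborel (A (k - Suc i)))"
      unfolding Lmeas_def by (rule emeasure_PiM) (use A in auto)
    also have "\<dots> = (\<Prod>i<k. emeasure lborel (A i))" by (rule prod.nat_diff_reindex)
    finally show "emeasure (distr (Lmeas k) (Lmeas k) (srev k)) (PiE {..<k} A) = (\<Prod>i<k. emeasure lborel (A i))" .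
  qed (simp_all add: Lmeas_def)
  then show ?thesis by (simp add: Lmeas_def)
qed

lemma sigma_finite_Lmeas: "sigma_finite_measure (Lmeas k)"
proof -
  interpret product_sigma_finite "\<lambda>_. lborel :: real measure" by standard
  show ?thesis unfolding Lmeas_def by (rule sigma_finite) simp
qed

lemma nn_integral_srev:
  assumes "f \<in> borel_measurable (Lmeas k)"
  shows "(\<integral>\<^sup>+z. f (srev k z) \<partial>Lmeas k) = (\<integral>\<^sup>+z. f z \<partial>Lmeas k)"
  using nn_integral_distr[OF measurable_srev, of f] assms by (simp add: distr_srev)

lemma integrable_srev:
  fixes f :: "_ \<Rightarrow> real"
  assumes "integrable (Lmeas k) f"
  shows "integrable (Lmeas k) (\<lambda>z. f (srev k z))"
  using integrable_distr_eq[OF measurable_srev borel_measurable_integrable[OF assms]] assms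
  by (simp add: distr_srev)

section \<open>The transfer-operator chain\<close>

lemma integral_pos_if_pos_on:
  fixes f :: "'a \<Rightarrow> real"
  assumes f: "integrable M f" and nonneg: "\<And>y. 0 \<le> f y"
    and B: "B \<in> sets M" "emeasure M B \<noteq> 0" and pos: "\<And>y. y \<in> B \<Longrightarrow> 0 < f y"
  shows "0 < (\<integral>y. f y \<partial>M)"
proof -
  have "(\<integral>y. f y \<partial>M) \<noteq> 0"
  proof
    assume "(\<integral>y. f y \<partial>M) = 0"
    then have "AE y in M. f y = 0" using integral_nonneg_eq_0_iff_AE[OF f] nonneg by simp
    then have "AE y in M. y \<notin> B" by (rule AE_mp) (auto intro!: AE_I2 dest: pos)
    then have "emeasure M B = 0"
      using AE_iff_measurable[OF B(1), of "\<lambda>y. y \<notin> B"] B(1) sets.sets_into_space by blast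
    then show False using B(2) by simp
  qed
  then show ?thesis using nonneg by (simp add: order_less_le)
qed

lemma borel_measurable_boltz[measurable]: "boltz \<in> borel_measurable borel"
  unfolding boltz_def by measurable

locale hard_core_chain =
  fixes v :: "real \<Rightarrow> ereal" and rhc R \<beta> p lam0 :: real and k :: nat
    and \<phi> :: "(nat \<Rightarrow> real) \<Rightarrow> real"
  assumes v_meas[measurable]: "v \<in> borel_measurable borel"
    and rhc_pos: "rhc > 0"
    and hard_core: "\<forall>r. 0 \<le> r \<and> r \<le> rhc \<longrightarrow> v r = \<infinity>"
    and finite_range: "\<forall>r. R \<le> r \<longrightarrow> v r = 0"
    and v_finite: "\<forall>r. rhc < r \<and> r \<le> R \<longrightarrow> \<bar>v r\<bar> \<noteq> \<infinity>"
    and v_bdd_below: "\<exists>c::real. \<forall>r. rhc < r \<and> r \<le> R \<longrightarrow> ereal c \<le> v r"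
    and k_pos: "0 < k"
    and beta_pos: "\<beta> > 0"
    and lam_pos: "lam0 > 0"
    and phi_meas[measurable]: "\<phi> \<in> borel_measurable (Lmeas k)"
    and phi_pos: "\<forall>z\<in>hcdom k rhc. \<phi> z > 0"
    and phi_L2: "set_integrable (Lmeas k) (hcdom k rhc) (\<lambda>z. (\<phi> z)\<^sup>2)"
    and phi_eigen: "\<forall>z\<in>hcdom k rhc.
          set_integrable (Lmeas k) (hcdom k rhc) (\<lambda>z'. Kker v \<beta> p k z z' * \<phi> z') \<and>
          (LINT z':hcdom k rhc|Lmeas k. Kker v \<beta> p k z z' * \<phi> z') = lam0 * \<phi> z"
begin

abbreviation "L \<equiv> Lmeas k"
abbreviation "S \<equiv> hcdom k rhc"

lemma rhc_less_R: "rhc < R"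
proof (rule ccontr)
  assume "\<not> rhc < R"
  then have "v rhc = 0" using finite_range by simp
  moreover have "v rhc = \<infinity>" using hard_core rhc_pos by simp
  ultimately show False by simp
qed

definition v_real :: "real \<Rightarrow> real" where "v_real r = real_of_ereal (v r)"

lemma borel_measurable_v_real[measurable]: "v_real \<in> borel_measurable borel"
  unfolding v_real_def by measurable

lemma v_eq_v_real: "rhc < r \<Longrightarrow> v r = ereal (v_real r)"
  using v_finite finite_range unfolding v_real_def
  by (cases "r \<le> R") (auto simp: ereal_real')

lemma v_real_beyond_range: "R \<le> r \<Longrightarrow> v_real r = 0"
  using finite_range unfolding v_real_def by simp

lemma v_real_bounded_below:
  obtains c where "\<And>r. rhc < r \<Longrightarrow> c \<le> v_real r"
proof -
  obtain c where c: "\<forall>r. rhc < r \<and> r \<le> R \<longrightarrow> ereal c \<le> v r" using v_bdd_below by blast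
  have "min c 0 \<le> v_real r" if "rhc < r" for r
  proof (cases "r \<le> R")
    case True
    then show ?thesis using c that v_eq_v_real[OF that] by fastforce
  qed (simp add: v_real_beyond_range)
  then show thesis using that by blast
qed

lemma hcdom_in_space: "z \<in> S \<Longrightarrow> z \<in> space L"
  unfolding hcdom_def by simp

lemma hcdom_coord_gt: "z \<in> S \<Longrightarrow> i < k \<Longrightarrow> rhc < z i"
  unfolding hcdom_def by simp

lemma hcdom_coord_nonneg: "z \<in> S \<Longrightarrow> i < k \<Longrightarrow> 0 \<le> z i"
  using hcdom_coord_gt rhc_pos by fastforce

lemma sum_hcdom_nonneg: "z \<in> S \<Longrightarrow> I \<subseteq> {..<k} \<Longrightarrow> 0 \<le> sum z I"
  by (auto intro!: sum_nonneg hcdom_coord_nonneg)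

lemma sum_hcdom_gt_rhc:
  assumes z: "z \<in> S" and "a < b" "b \<le> k"
  shows "rhc < (\<Sum>l\<in>{a..<b}. z l)"
proof -
  have "(\<Sum>l\<in>{a..<b}. z l) = z a + (\<Sum>l\<in>{Suc a..<b}. z l)"
    using \<open>a < b\<close> by (rule sum.atLeast_Suc_lessThan)
  moreover have "0 \<le> (\<Sum>l\<in>{Suc a..<b}. z l)" using assms by (intro sum_hcdom_nonneg) auto
  ultimately show ?thesis using hcdom_coord_gt[OF z, of a] assms by simp
qed

definition V_real :: "(nat \<Rightarrow> real) \<Rightarrow> real" where
  "V_real z = (\<Sum>i\<in>{0..k}. \<Sum>j\<in>{i<..k}. v_real (\<Sum>l\<in>{i..<j}. z l)) + p * (\<Sum>i<k. z i)"

definition W_real :: "(nat \<Rightarrow> real) \<Rightarrow> (nat \<Rightarrow> real) \<Rightarrow> real" where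
  "W_real z z' = (\<Sum>i<k. \<Sum>j<k. v_real ((\<Sum>l\<in>{i..<k}. z l) + (\<Sum>l\<le>j. z' l)))"

lemma borel_measurable_V_real[measurable]: "V_real \<in> borel_measurable L"
  unfolding V_real_def Lmeas_def by measurable

lemma Vp_eq_V_real:
  assumes z: "z \<in> S"
  shows "Vp v p k z = ereal (V_real z)"
proof -
  have "(\<Sum>i\<in>{0..k}. \<Sum>j\<in>{i<..k}. v (\<Sum>l\<in>{i..<j}. z l))
      = (\<Sum>i\<in>{0..k}. \<Sum>j\<in>{i<..k}. ereal (v_real (\<Sum>l\<in>{i..<j}. z l)))"
    by (intro sum.cong refl v_eq_v_real) (auto intro!: sum_hcdom_gt_rhc[OF z])
  then show ?thesis unfolding Vp_def V_real_def by simp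
qed

lemma W_real_arg_gt_rhc:
  assumes "z \<in> S" "z' \<in> S" "i < k" "j < k"
  shows "rhc < (\<Sum>l\<in>{i..<k}. z l) + (\<Sum>l\<le>j. z' l)"
proof -
  have "{..j} \<subseteq> {..<k}" using assms by auto
  then show ?thesis using sum_hcdom_gt_rhc[of z i k] sum_hcdom_nonneg[of z' "{..j}"] assms by simp
qed

lemma Wint_eq_W_real:
  assumes "z \<in> S" "z' \<in> S"
  shows "Wint v k z z' = ereal (W_real z z')"
proof -
  have "(\<Sum>i<k. \<Sum>j<k. v ((\<Sum>l\<in>{i..<k}. z l) + (\<Sum>l\<le>j. z' l)))
      = (\<Sum>i<k. \<Sum>j<k. ereal (v_real ((\<Sum>l\<in>{i..<k}. z l) + (\<Sum>l\<le>j. z' l))))"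
    by (intro sum.cong refl v_eq_v_real) (auto intro!: W_real_arg_gt_rhc[OF assms])
  then show ?thesis unfolding Wint_def W_real_def by simp
qed

lemma W_real_bounded_below:
  obtains c where "\<And>z z'. z \<in> S \<Longrightarrow> z' \<in> S \<Longrightarrow> c \<le> W_real z z'"
proof -
  obtain c where c: "\<And>r. rhc < r \<Longrightarrow> c \<le> v_real r" using v_real_bounded_below by blast
  have "(\<Sum>i<k. \<Sum>j<k. c) \<le> W_real z z'" if "z \<in> S" "z' \<in> S" for z z'
    unfolding W_real_def using that by (intro sum_mono c W_real_arg_gt_rhc) auto
  then show thesis using that by blast
qed

lemma W_real_eq_0_if_far:
  assumes "z \<in> S" "z' \<in> S" and far: "R \<le> z (k - 1) \<or> R \<le> z' 0"
  shows "W_real z z' = 0"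
  unfolding W_real_def
proof (intro sum.neutral ballI v_real_beyond_range)
  fix i j assume "i \<in> {..<k}" "j \<in> {..<k}"
  then have "z (k - 1) \<le> (\<Sum>l\<in>{i..<k}. z l)" "z' 0 \<le> (\<Sum>l\<le>j. z' l)"
    using assms by (auto intro!: member_le_sum hcdom_coord_nonneg)
  moreover have "0 \<le> (\<Sum>l\<in>{i..<k}. z l)" "0 \<le> (\<Sum>l\<le>j. z' l)"
    using assms \<open>j \<in> {..<k}\<close> by (auto intro!: sum_hcdom_nonneg)
  ultimately show "R \<le> (\<Sum>l\<in>{i..<k}. z l) + (\<Sum>l\<le>j. z' l)" using far by linarith
qed

definition boltz_half :: "(nat \<Rightarrow> real) \<Rightarrow> real" where
  "boltz_half z = exp (- (\<beta> * (V_real z / 2)))"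

lemma borel_measurable_boltz_half[measurable]: "boltz_half \<in> borel_measurable L"
  unfolding boltz_half_def by measurable

lemma boltz_half_pos: "0 < boltz_half z"
  unfolding boltz_half_def by simp

lemma Kker_factor:
  assumes "z \<in> S" "z' \<in> S"
  shows "Kker v \<beta> p k z z' = boltz_half z * exp (- (\<beta> * W_real z z')) * boltz_half z'"
  using assms unfolding Kker_def boltz_def boltz_half_def
  by (simp add: Vp_eq_V_real Wint_eq_W_real exp_add[symmetric] algebra_simps)

lemma Kker_nonneg: "0 \<le> Kker v \<beta> p k z z'"
  unfolding Kker_def boltz_def by simp

lemma borel_measurable_Kker[measurable]:
  "(\<lambda>x. Kker v \<beta> p k (fst x) (snd x)) \<in> borel_measurable (L \<Otimes>\<^sub>M L)"
  unfolding Kker_def Vp_def Wint_def Lmeas_def by measurable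


lemma phi_hcdom_pos: "z \<in> S \<Longrightarrow> 0 < \<phi> z"
  using phi_pos by auto

lemma eigen_integrable: "z \<in> S \<Longrightarrow> integrable L (\<lambda>y. indicator S y * (Kker v \<beta> p k z y * \<phi> y))"
  using phi_eigen by (auto simp: set_integrable_def)

lemma eigen_integral: "z \<in> S \<Longrightarrow> (\<integral>y. indicator S y * (Kker v \<beta> p k z y * \<phi> y) \<partial>L) = lam0 * \<phi> z"
  using phi_eigen by (auto simp: set_lebesgue_integral_def)

definition far_point :: "nat \<Rightarrow> real" where
  "far_point = (\<lambda>i. if i < k then R + 1 else undefined)"

lemma far_point_in_hcdom: "far_point \<in> S"
  using rhc_less_R unfolding hcdom_def far_point_def space_Lmeas by (simp add: PiE_iff extensional_def)

lemma far_point_last: "R \<le> far_point (k - 1)"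
  using k_pos unfolding far_point_def by simp

definition boltz_phi :: "(nat \<Rightarrow> real) \<Rightarrow> real" where
  "boltz_phi y = indicator S y * (boltz_half y * \<phi> y)"

lemma borel_measurable_boltz_phi[measurable]: "boltz_phi \<in> borel_measurable L"
  unfolding boltz_phi_def by measurable

lemma boltz_phi_nonneg: "0 \<le> boltz_phi y"
  unfolding boltz_phi_def using boltz_half_pos phi_hcdom_pos by (simp add: indicator_def less_imp_le)

text \<open>Seen from a configuration whose last spacing exceeds R the interaction W vanishes, so the
  eigenvalue equation there integrates exactly boltz_phi.\<close>

lemma integrable_boltz_phi: "integrable L boltz_phi"
proof -
  have eq: "indicator S y * (Kker v \<beta> p k far_point y * \<phi> y) / boltz_half far_point = boltz_phi y" for y
    using Kker_factor[OF far_point_in_hcdom, of y] W_real_eq_0_if_far[OF far_point_in_hcdom, of y]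
      far_point_last boltz_half_pos[of far_point]
    by (cases "y \<in> S") (simp_all add: boltz_phi_def)
  have "integrable L (\<lambda>y. indicator S y * (Kker v \<beta> p k far_point y * \<phi> y) / boltz_half far_point)"
    using eigen_integrable[OF far_point_in_hcdom] by (rule integrable_divide_zero)
  then show ?thesis unfolding eq .
qed

lemma eigenfunction_le_boltz_half:
  obtains C where "0 < C" "\<And>z. z \<in> S \<Longrightarrow> lam0 * \<phi> z \<le> C * boltz_half z"
proof -
  obtain c where c: "\<And>z z'. z \<in> S \<Longrightarrow> z' \<in> S \<Longrightarrow> c \<le> W_real z z'"
    using W_real_bounded_below by blast
  define C where "C = exp (- (\<beta> * c)) * (\<integral>y. boltz_phi y \<partial>L)"
  have le: "lam0 * \<phi> z \<le> C * boltz_half z" if z: "z \<in> S" for z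
  proof -
    have "lam0 * \<phi> z = (\<integral>y. indicator S y * (Kker v \<beta> p k z y * \<phi> y) \<partial>L)"
      using eigen_integral[OF z] by simp
    also have "\<dots> \<le> (\<integral>y. boltz_half z * exp (- (\<beta> * c)) * boltz_phi y \<partial>L)"
    proof (rule integral_mono[OF eigen_integrable[OF z]])
      show "integrable L (\<lambda>y. boltz_half z * exp (- (\<beta> * c)) * boltz_phi y)"
        using integrable_boltz_phi by simp
      fix y
      show "indicator S y * (Kker v \<beta> p k z y * \<phi> y) \<le> boltz_half z * exp (- (\<beta> * c)) * boltz_phi y"
      proof (cases "y \<in> S")
        case True
        have "exp (- (\<beta> * W_real z y)) \<le> exp (- (\<beta> * c))"
          using c[OF z True] beta_pos by simp
        then show ?thesis
          using True boltz_half_pos[of z] boltz_half_pos[of y] phi_hcdom_pos[OF True]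
          by (simp add: Kker_factor[OF z True] boltz_phi_def mult_ac mult_left_mono)
      qed (simp add: boltz_phi_def)
    qed
    also have "\<dots> = C * boltz_half z" by (simp add: C_def)
    finally show ?thesis .
  qed
  have "0 < lam0 * \<phi> far_point" using lam_pos phi_hcdom_pos[OF far_point_in_hcdom] by simp
  also have "\<dots> \<le> C * boltz_half far_point" by (rule le[OF far_point_in_hcdom])
  finally have "0 < C" using boltz_half_pos[of far_point] by (simp add: zero_less_mult_iff)
  then show thesis using that le by blast
qed

definition far_set :: "(nat \<Rightarrow> real) set" where "far_set = {y \<in> S. R \<le> y 0}"

lemma sets_far_set[measurable]: "far_set \<in> sets L"
proof -
  have "(\<lambda>y. y 0) \<in> measurable L lborel"
    unfolding Lmeas_def by (rule measurable_component_singleton) (use k_pos in simp)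
  then have "(\<lambda>y. y 0) -` {R..} \<inter> space L \<in> sets L" by (rule measurable_sets) simp
  moreover have "far_set = S \<inter> ((\<lambda>y. y 0) -` {R..} \<inter> space L)"
    unfolding far_set_def using hcdom_in_space by auto
  ultimately show ?thesis by simp
qed

lemma far_set_subset: "far_set \<subseteq> S"
  unfolding far_set_def by auto

lemma emeasure_far_set_nonzero: "emeasure L far_set \<noteq> 0"
proof -
  interpret product_sigma_finite "\<lambda>_. lborel :: real measure" by standard
  define box where "box = PiE {..<k} (\<lambda>i. if i = 0 then {R..R+1} else {rhc<..rhc+1})"
  have "box \<subseteq> far_set"
  proof
    fix y assume y: "y \<in> box"
    then have coord: "y i \<in> (if i = 0 then {R..R+1} else {rhc<..rhc+1})" if "i < k" for i
      using that unfolding box_def PiE_iff by blast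
    have "rhc < y i" if "i < k" for i
      using coord[OF that] rhc_less_R by (cases "i = 0") auto
    moreover have "R \<le> y 0" using coord[of 0] k_pos by simp
    moreover have "y \<in> space L" using y by (simp add: box_def space_Lmeas PiE_iff)
    ultimately show "y \<in> far_set" by (simp add: far_set_def hcdom_def)
  qed
  moreover have "emeasure L box = 1"
    unfolding box_def Lmeas_def by (subst emeasure_PiM) (auto intro!: prod.neutral)
  moreover have "box \<in> sets L" unfolding box_def Lmeas_def by (rule sets_PiM_I_finite) auto
  ultimately show ?thesis using emeasure_mono[of box far_set L] by auto
qed

definition far_weight :: "(nat \<Rightarrow> real) \<Rightarrow> real" where
  "far_weight y = indicator far_set y * (boltz_half y * \<phi> y)"

lemma borel_measurable_far_weight[measurable]: "far_weight \<in> borel_measurable L"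
  unfolding far_weight_def by measurable

lemma far_weight_bounds: "0 \<le> far_weight y \<and> far_weight y \<le> boltz_phi y"
  unfolding far_weight_def boltz_phi_def using far_set_subset boltz_half_pos phi_hcdom_pos
  by (auto simp: indicator_def less_imp_le)

lemma integrable_far_weight: "integrable L far_weight"
  by (rule Bochner_Integration.integrable_bound[OF integrable_boltz_phi])
    (use far_weight_bounds boltz_phi_nonneg in \<open>auto intro!: AE_I2\<close>)

lemma integral_far_weight_pos: "0 < (\<integral>y. far_weight y \<partial>L)"
  by (rule integral_pos_if_pos_on[OF integrable_far_weight _ sets_far_set emeasure_far_set_nonzero])
    (use far_weight_bounds far_set_subset boltz_half_pos phi_hcdom_pos in \<open>auto simp: far_weight_def\<close>)

definition trans_density :: "(nat \<Rightarrow> real) \<Rightarrow> (nat \<Rightarrow> real) \<Rightarrow> real" where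
  "trans_density z y = indicator S y * Kker v \<beta> p k z y * \<phi> y / (lam0 * \<phi> z)"

lemma trans_density_nonneg:
  assumes "z \<in> S"
  shows "0 \<le> trans_density z y"
proof (cases "y \<in> S")
  case True
  then have "0 \<le> Kker v \<beta> p k z y * \<phi> y" using Kker_nonneg phi_hcdom_pos by (simp add: less_imp_le)
  moreover have "0 < lam0 * \<phi> z" using lam_pos phi_hcdom_pos assms by simp
  ultimately show ?thesis using True by (simp add: trans_density_def divide_nonneg_pos)
qed (simp add: trans_density_def)

lemma trans_density_minorized:
  obtains c where "0 < c" "\<And>z y. z \<in> S \<Longrightarrow> c * far_weight y \<le> trans_density z y"
proof -
  obtain C where C: "0 < C" "\<And>z. z \<in> S \<Longrightarrow> lam0 * \<phi> z \<le> C * boltz_half z"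
    using eigenfunction_le_boltz_half by blast
  have "far_weight y / C \<le> trans_density z y" if z: "z \<in> S" for z y
  proof (cases "y \<in> far_set")
    case True
    then have y: "y \<in> S" "R \<le> y 0" using far_set_subset by (auto simp: far_set_def)
    have "trans_density z y = boltz_half z * (boltz_half y * \<phi> y) / (lam0 * \<phi> z)"
      using y by (simp add: trans_density_def Kker_factor[OF z] W_real_eq_0_if_far[OF z] mult_ac)
    also have "\<dots> \<ge> boltz_half z * (boltz_half y * \<phi> y) / (C * boltz_half z)"
      using C lam_pos phi_hcdom_pos z y(1) boltz_half_pos
      by (intro divide_left_mono) (auto intro!: mult_nonneg_nonneg mult_pos_pos less_imp_le)
    moreover have "boltz_half z * (boltz_half y * \<phi> y) / (C * boltz_half z) = far_weight y / C"
      using True boltz_half_pos[of z] by (simp add: far_weight_def)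
    ultimately show ?thesis by simp
  qed (use trans_density_nonneg[OF z] in \<open>simp add: far_weight_def\<close>)
  then show thesis using that[of "1 / C"] C(1) by simp
qed


abbreviation "Pt \<equiv> Ptrans v \<beta> p k rhc lam0 \<phi>"

lemma borel_measurable_trans_density[measurable]:
  "(\<lambda>x. trans_density (fst x) (snd x)) \<in> borel_measurable (L \<Otimes>\<^sub>M L)"
  unfolding trans_density_def by measurable

lemma borel_measurable_trans_density_raw[measurable (raw)]:
  assumes "f \<in> measurable M L" "g \<in> measurable M L"
  shows "(\<lambda>x. trans_density (f x) (g x)) \<in> borel_measurable M"
  using measurable_compose[OF measurable_Pair[OF assms] borel_measurable_trans_density] by simp

lemma Ptrans_eq_density: "Pt z = density L (\<lambda>y. ennreal (trans_density z y))"
  unfolding Ptrans_def trans_density_def by simp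

lemma sets_Ptrans[simp]: "sets (Pt z) = sets L"
  unfolding Ptrans_eq_density by simp

lemma space_Ptrans[simp]: "space (Pt z) = space L"
  unfolding Ptrans_eq_density by simp

lemma emeasure_Ptrans:
  assumes "z \<in> space L" "A \<in> sets L"
  shows "emeasure (Pt z) A = (\<integral>\<^sup>+y. ennreal (trans_density z y) * indicator A y \<partial>L)"
  unfolding Ptrans_eq_density using assms by (subst emeasure_density) auto

lemma borel_measurable_emeasure_Ptrans[measurable]:
  assumes A: "A \<in> sets L"
  shows "(\<lambda>z. emeasure (Pt z) A) \<in> borel_measurable L"
proof -
  interpret sigma_finite_measure L by (rule sigma_finite_Lmeas)
  have "(\<lambda>z. \<integral>\<^sup>+y. ennreal (trans_density z y) * indicator A y \<partial>L) \<in> borel_measurable L"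
    using A by measurable
  then show ?thesis by (rule measurable_cong[THEN iffD1, rotated]) (simp add: emeasure_Ptrans[OF _ A])
qed

lemma trans_density_eq:
  "trans_density z = (\<lambda>y. indicator S y * (Kker v \<beta> p k z y * \<phi> y) / (lam0 * \<phi> z))"
  by (simp add: fun_eq_iff trans_density_def mult.assoc)

lemma integrable_trans_density: "z \<in> S \<Longrightarrow> integrable L (trans_density z)"
  unfolding trans_density_eq by (rule integrable_divide_zero[OF eigen_integrable])

lemma integral_trans_density: "z \<in> S \<Longrightarrow> (\<integral>y. trans_density z y \<partial>L) = 1"
  unfolding trans_density_eq using eigen_integral[of z] lam_pos phi_hcdom_pos[of z] by simp

lemma prob_space_Ptrans:
  assumes z: "z \<in> S"
  shows "prob_space (Pt z)"
proof (rule prob_spaceI)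
  have "emeasure (Pt z) (space L) = (\<integral>\<^sup>+y. ennreal (trans_density z y) \<partial>L)"
    using hcdom_in_space[OF z] by (simp add: emeasure_Ptrans)
  also have "\<dots> = 1"
    using integrable_trans_density[OF z] integral_trans_density[OF z] trans_density_nonneg[OF z]
    by (subst nn_integral_eq_integral) auto
  finally show "emeasure (Pt z) (space (Pt z)) = 1" by simp
qed

lemma emeasure_Ptrans_space: "z \<in> S \<Longrightarrow> emeasure (Pt z) (space L) = 1"
  using prob_space.emeasure_space_1[OF prob_space_Ptrans] by simp

lemma Ptrans_outside_hcdom:
  assumes "z \<in> S"
  shows "emeasure (Pt z) (space L - S) = 0"
proof -
  have "emeasure (Pt z) (space L - S) = (\<integral>\<^sup>+y. ennreal (trans_density z y) * indicator (space L - S) y \<partial>L)"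
    using assms hcdom_in_space by (intro emeasure_Ptrans) auto
  also have "\<dots> = (\<integral>\<^sup>+y. 0 \<partial>L)"
    by (rule nn_integral_cong) (simp add: trans_density_def indicator_def)
  finally show ?thesis by simp
qed

definition minorant :: "(nat \<Rightarrow> real) measure" where
  "minorant = density L (\<lambda>y. ennreal (far_weight y / (\<integral>y. far_weight y \<partial>L)))"

lemma sets_minorant: "sets minorant = sets L"
  unfolding minorant_def by simp

lemma prob_space_minorant: "prob_space minorant"
proof (rule prob_spaceI)
  have "emeasure minorant (space minorant) = (\<integral>\<^sup>+y. ennreal (far_weight y / (\<integral>y. far_weight y \<partial>L)) \<partial>L)"
    unfolding minorant_def by (subst emeasure_density) auto
  also have "\<dots> = 1"
    using integrable_far_weight far_weight_bounds integral_far_weight_pos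
    by (subst nn_integral_eq_integral) auto
  finally show "emeasure minorant (space minorant) = 1" .
qed

lemma Ptrans_minorized:
  obtains \<epsilon> where "0 < \<epsilon>" "\<epsilon> < 1"
    "\<And>z A. z \<in> S \<Longrightarrow> A \<in> sets L \<Longrightarrow> ennreal \<epsilon> * emeasure minorant A \<le> emeasure (Pt z) A"
proof -
  obtain c where c: "0 < c" "\<And>z y. z \<in> S \<Longrightarrow> c * far_weight y \<le> trans_density z y"
    using trans_density_minorized by blast
  define G where "G = (\<integral>y. far_weight y \<partial>L)"
  have G: "0 < G" unfolding G_def by (rule integral_far_weight_pos)
  define \<epsilon> where "\<epsilon> = min (c * G) (1 / 2)"
  have \<epsilon>: "0 < \<epsilon>" "\<epsilon> < 1" "\<epsilon> \<le> c * G" using c(1) G by (auto simp: \<epsilon>_def)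
  have "ennreal \<epsilon> * emeasure minorant A \<le> emeasure (Pt z) A" if z: "z \<in> S" and A: "A \<in> sets L" for z A
  proof -
    have "ennreal \<epsilon> * emeasure minorant A = ennreal \<epsilon> * (\<integral>\<^sup>+y. ennreal (far_weight y / G) * indicator A y \<partial>L)"
      unfolding minorant_def G_def using A by (subst emeasure_density) auto
    also have "\<dots> = (\<integral>\<^sup>+y. ennreal \<epsilon> * (ennreal (far_weight y / G) * indicator A y) \<partial>L)"
      by (rule nn_integral_cmult[symmetric]) (use A in measurable)
    also have "\<dots> \<le> (\<integral>\<^sup>+y. ennreal (trans_density z y) * indicator A y \<partial>L)"
    proof (rule nn_integral_mono)
      fix y
      have "\<epsilon> * (far_weight y / G) \<le> c * far_weight y"
        using \<epsilon>(3) G far_weight_bounds[of y] mult_right_mono[OF \<epsilon>(3), of "far_weight y / G"]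
        by (simp add: field_simps)
      then have "\<epsilon> * (far_weight y / G) \<le> trans_density z y" using c(2)[OF z, of y] by linarith
      then have "ennreal \<epsilon> * ennreal (far_weight y / G) \<le> ennreal (trans_density z y)"
        using \<epsilon>(1) G far_weight_bounds[of y] by (simp add: ennreal_mult[symmetric] ennreal_leI)
      then show "ennreal \<epsilon> * (ennreal (far_weight y / G) * indicator A y) \<le> ennreal (trans_density z y) * indicator A y"
        by (simp add: indicator_def)
    qed
    also have "\<dots> = emeasure (Pt z) A" using emeasure_Ptrans[OF hcdom_in_space[OF z] A] by simp
    finally show ?thesis .
  qed
  then show thesis using that \<epsilon> by blast
qed

text \<open>Ptrans is a probability kernel only on S: elsewhere \<phi> may vanish or be negative. The
  subprobability kernel below agrees with it wherever it has mass at most 1, which is all that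
  binds against measures concentrated on S see.\<close>

definition subprob_points :: "(nat \<Rightarrow> real) set" where
  "subprob_points = {z \<in> space L. emeasure (Pt z) (space L) \<le> 1}"

definition Ptrans_kernel :: "(nat \<Rightarrow> real) \<Rightarrow> (nat \<Rightarrow> real) measure" where
  "Ptrans_kernel z = (if z \<in> subprob_points then Pt z else null_measure L)"

lemma sets_subprob_points[measurable]: "subprob_points \<in> sets L"
  unfolding subprob_points_def by measurable

lemma hcdom_subset_subprob_points: "S \<subseteq> subprob_points"
  using hcdom_in_space emeasure_Ptrans_space by (simp add: subprob_points_def subset_iff)

lemma Ptrans_kernel_hcdom: "z \<in> S \<Longrightarrow> Ptrans_kernel z = Pt z"
  using hcdom_subset_subprob_points by (auto simp: Ptrans_kernel_def)

lemma measurable_Ptrans_kernel: "Ptrans_kernel \<in> measurable L (subprob_algebra L)"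
proof (rule measurable_subprob_algebra)
  have "space L \<noteq> {}" using hcdom_in_space far_point_in_hcdom by blast
  then show "subprob_space (Ptrans_kernel a)" for a
    by (auto simp: Ptrans_kernel_def subprob_points_def intro: subprob_spaceI subprob_space_null_measure)
  show "sets (Ptrans_kernel a) = sets L" for a
    by (simp add: Ptrans_kernel_def)
  fix A assume [measurable]: "A \<in> sets L"
  have "(\<lambda>a. if a \<in> subprob_points then emeasure (Pt a) A else 0) \<in> borel_measurable L" by measurable
  then show "(\<lambda>a. emeasure (Ptrans_kernel a) A) \<in> borel_measurable L"
    by (rule measurable_cong[THEN iffD1, rotated]) (simp add: Ptrans_kernel_def)
qed

lemma bind_Ptrans_eq_bind_Ptrans_kernel:
  assumes "sets M = sets L" "space M \<noteq> {}" "AE x in M. x \<in> S"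
  shows "M \<bind> Pt = M \<bind> Ptrans_kernel"
proof (rule bind_cong_AE_set[OF assms(1,2) measurable_Ptrans_kernel sets_Ptrans sets_subprob_points])
  show "AE x in M. x \<in> subprob_points"
    using assms(3) by (rule AE_mp) (use hcdom_subset_subprob_points in \<open>auto intro!: AE_I2\<close>)
  show "Pt x = Ptrans_kernel x" if "x \<in> subprob_points" for x
    using that by (simp add: Ptrans_kernel_def)
  show "Pt x \<notin> space (subprob_algebra L)" if "x \<in> space L" "x \<notin> subprob_points" for x
    using that subprob_space.subprob_emeasure_le_1[of "Pt x"]
    by (auto simp: space_subprob_algebra subprob_points_def)
qed

lemma doeblin_Ptrans_kernel:
  obtains \<epsilon> where "doeblin L S Ptrans_kernel minorant \<epsilon>"
proof -
  obtain \<epsilon> where \<epsilon>: "0 < \<epsilon>" "\<epsilon> < 1"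
    "\<And>z A. z \<in> S \<Longrightarrow> A \<in> sets L \<Longrightarrow> ennreal \<epsilon> * emeasure minorant A \<le> emeasure (Pt z) A"
    using Ptrans_minorized by blast
  have "doeblin L S Ptrans_kernel minorant \<epsilon>"
    by (rule doeblin.intro) (simp_all add: \<epsilon> measurable_Ptrans_kernel Ptrans_kernel_hcdom prob_space_Ptrans
        Ptrans_outside_hcdom prob_space_minorant sets_minorant)
  then show thesis by (rule that)
qed


definition pi_weight :: "(nat \<Rightarrow> real) \<Rightarrow> real" where
  "pi_weight y = indicator S y * (\<phi> (srev k y) * \<phi> y)"

definition pi_norm :: real where "pi_norm = (\<integral>y. pi_weight y \<partial>L)"

lemma borel_measurable_pi_weight[measurable]: "pi_weight \<in> borel_measurable L"
  unfolding pi_weight_def by measurable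

lemma pi_weight_pos: "y \<in> S \<Longrightarrow> 0 < pi_weight y"
  using srev_in_hcdom_iff[OF hcdom_in_space] phi_hcdom_pos by (simp add: pi_weight_def)

lemma pi_weight_nonneg: "0 \<le> pi_weight y"
  using pi_weight_pos[of y] by (cases "y \<in> S") (auto simp: pi_weight_def)

text \<open>\<phi>(s y) \<phi>(y) is integrable because it is dominated by the mean of \<phi>(y)^2 and its reflection.\<close>

lemma integrable_pi_weight: "integrable L pi_weight"
proof -
  define f where "f y = indicator S y * (\<phi> y)\<^sup>2" for y
  have "integrable L f" using phi_L2 unfolding f_def set_integrable_def by simp
  then have "integrable L (\<lambda>y. (f y + f (srev k y)) / 2)" using integrable_srev by auto
  then show ?thesis
  proof (rule Bochner_Integration.integrable_bound[OF _ borel_measurable_pi_weight], intro AE_I2)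
    fix y assume y: "y \<in> space L"
    have "2 * (\<phi> (srev k y) * \<phi> y) \<le> (\<phi> y)\<^sup>2 + (\<phi> (srev k y))\<^sup>2"
      using sum_squares_bound[of "\<phi> (srev k y)" "\<phi> y"] by (simp add: power2_eq_square algebra_simps)
    then show "norm (pi_weight y) \<le> norm ((f y + f (srev k y)) / 2)"
      using pi_weight_nonneg[of y] srev_in_hcdom_iff[OF y]
      by (cases "y \<in> S") (simp_all add: pi_weight_def f_def)
  qed
qed

lemma pi_norm_pos: "0 < pi_norm"
  unfolding pi_norm_def
  by (rule integral_pos_if_pos_on[OF integrable_pi_weight pi_weight_nonneg sets_far_set
        emeasure_far_set_nonzero]) (use far_set_subset pi_weight_pos in blast)

abbreviation "PI \<equiv> pi_meas k rhc \<phi>"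

lemma pi_meas_eq_density: "PI = density L (\<lambda>z. ennreal (pi_weight z / pi_norm))"
  unfolding pi_meas_def pi_weight_def pi_norm_def set_lebesgue_integral_def by (simp add: mult.assoc)

lemma sets_pi_meas: "sets PI = sets L"
  unfolding pi_meas_eq_density by simp

lemma space_pi_meas: "space PI = space L"
  unfolding pi_meas_eq_density by simp

lemma prob_space_pi_meas: "prob_space PI"
proof (rule prob_spaceI)
  have "emeasure PI (space PI) = (\<integral>\<^sup>+y. ennreal (pi_weight y / pi_norm) \<partial>L)"
    unfolding pi_meas_eq_density by (subst emeasure_density) auto
  also have "\<dots> = 1"
    using integrable_pi_weight pi_weight_nonneg pi_norm_pos
    by (subst nn_integral_eq_integral) (auto simp: pi_norm_def)
  finally show "emeasure PI (space PI) = 1" .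
qed

lemma AE_pi_meas_hcdom: "AE x in PI. x \<in> S"
  unfolding pi_meas_eq_density
  by (subst AE_density) (auto simp: pi_weight_def indicator_def intro!: AE_I2)

text \<open>Balance equation. The symmetry K(y,x) = K(s x, s y) and the substitution y := s y turn the
  integral into the eigenvalue equation at s x.\<close>

lemma nn_integral_pi_weight_trans_density:
  assumes x: "x \<in> space L"
  shows "(\<integral>\<^sup>+y. ennreal (pi_weight y * trans_density y x) \<partial>L) = ennreal (pi_weight x)"
proof (cases "x \<in> S")
  case False
  then show ?thesis by (simp add: trans_density_def pi_weight_def)
next
  case True
  have sx: "srev k x \<in> S" using srev_in_hcdom_iff[OF x] True by simp
  define J where "J w = indicator S w * (Kker v \<beta> p k (srev k x) w * \<phi> w)" for w
  have "Kker v \<beta> p k (srev k x) \<in> borel_measurable L"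
    using measurable_Pair2[OF borel_measurable_Kker srev_in_space[OF x]] by simp
  then have J[measurable]: "J \<in> borel_measurable L" unfolding J_def by measurable
  have J_nonneg: "0 \<le> J w" for w
    using Kker_nonneg phi_hcdom_pos by (cases "w \<in> S") (auto simp: J_def less_imp_le)
  have pointwise: "pi_weight y * trans_density y x = \<phi> x / lam0 * J (srev k y)" if y: "y \<in> space L" for y
  proof (cases "y \<in> S")
    case True
    then have "J (srev k y) = Kker v \<beta> p k y x * \<phi> (srev k y)"
      using srev_in_hcdom_iff[OF y] Kker_srev[of v \<beta> p k x y] by (simp add: J_def)
    then show ?thesis
      using True \<open>x \<in> S\<close> phi_hcdom_pos[OF True] lam_pos by (simp add: pi_weight_def trans_density_def)
  next
    case False
    then show ?thesis using srev_in_hcdom_iff[OF y] by (simp add: pi_weight_def J_def)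
  qed
  have "0 \<le> \<phi> x / lam0" using phi_hcdom_pos[OF True] lam_pos by simp
  then have "(\<integral>\<^sup>+y. ennreal (pi_weight y * trans_density y x) \<partial>L)
      = (\<integral>\<^sup>+y. ennreal (\<phi> x / lam0) * ennreal (J (srev k y)) \<partial>L)"
    by (intro nn_integral_cong) (simp only: pointwise ennreal_mult J_nonneg)
  also have "\<dots> = ennreal (\<phi> x / lam0) * (\<integral>\<^sup>+y. ennreal (J y) \<partial>L)"
    using nn_integral_srev[of "\<lambda>y. ennreal (J y)"] by (simp add: nn_integral_cmult)
  also have "(\<integral>\<^sup>+y. ennreal (J y) \<partial>L) = ennreal (lam0 * \<phi> (srev k x))"
    using nn_integral_eq_integral[OF eigen_integrable[OF sx]] J_nonneg eigen_integral[OF sx]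
    by (simp add: J_def)
  also have "ennreal (\<phi> x / lam0) * ennreal (lam0 * \<phi> (srev k x)) = ennreal (pi_weight x)"
    using True lam_pos phi_hcdom_pos[OF True] phi_hcdom_pos[OF sx]
    by (simp add: pi_weight_def ennreal_mult[symmetric])
  finally show ?thesis .
qed

lemma bind_pi_meas_Ptrans_kernel: "PI \<bind> Ptrans_kernel = PI"
proof (rule measure_eqI)
  have nonempty: "space PI \<noteq> {}"
    using space_pi_meas hcdom_in_space far_point_in_hcdom by blast
  have kernel: "Ptrans_kernel \<in> measurable PI (subprob_algebra L)"
    using measurable_Ptrans_kernel by (simp add: measurable_cong_sets[OF sets_pi_meas refl])
  have sets_bind: "sets (PI \<bind> Ptrans_kernel) = sets L"
    using sets_bind[OF _ nonempty] sets_kernel[OF measurable_Ptrans_kernel] space_pi_meas by auto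
  then show "sets (PI \<bind> Ptrans_kernel) = sets PI" by (simp add: sets_pi_meas)
  fix A assume "A \<in> sets (PI \<bind> Ptrans_kernel)"
  then have A[measurable]: "A \<in> sets L" using sets_bind by simp
  interpret pair_sigma_finite L L by (simp add: pair_sigma_finite_def sigma_finite_Lmeas)
  define T where "T y x = ennreal (indicator A x / pi_norm) * ennreal (pi_weight y * trans_density y x)" for y x
  have "emeasure (PI \<bind> Ptrans_kernel) A = (\<integral>\<^sup>+y. emeasure (Ptrans_kernel y) A \<partial>PI)"
    by (rule emeasure_bind[OF nonempty kernel A])
  also have "\<dots> = (\<integral>\<^sup>+y. ennreal (pi_weight y / pi_norm) * emeasure (Ptrans_kernel y) A \<partial>L)"
    unfolding pi_meas_eq_density using measurable_Ptrans_kernel by (intro nn_integral_density) measurable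
  also have "\<dots> = (\<integral>\<^sup>+y. \<integral>\<^sup>+x. T y x \<partial>L \<partial>L)"
  proof (rule nn_integral_cong)
    fix y assume y: "y \<in> space L"
    show "ennreal (pi_weight y / pi_norm) * emeasure (Ptrans_kernel y) A = (\<integral>\<^sup>+x. T y x \<partial>L)"
    proof (cases "y \<in> S")
      case True
      have "ennreal (pi_weight y / pi_norm) * emeasure (Ptrans_kernel y) A
          = (\<integral>\<^sup>+x. ennreal (pi_weight y / pi_norm) * (ennreal (trans_density y x) * indicator A x) \<partial>L)"
        using True y by (simp add: Ptrans_kernel_hcdom emeasure_Ptrans nn_integral_cmult)
      also have "\<dots> = (\<integral>\<^sup>+x. T y x \<partial>L)"
        using pi_weight_nonneg[of y] pi_norm_pos trans_density_nonneg[OF True]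
        by (intro nn_integral_cong) (simp add: T_def ennreal_mult[symmetric] indicator_def)
      finally show ?thesis .
    qed (simp add: T_def pi_weight_def)
  qed
  also have "\<dots> = (\<integral>\<^sup>+x. \<integral>\<^sup>+y. T y x \<partial>L \<partial>L)"
    by (rule Fubini'[where f = "\<lambda>x y. T y x"]) (unfold T_def, measurable)
  also have "\<dots> = (\<integral>\<^sup>+x. ennreal (pi_weight x / pi_norm) * indicator A x \<partial>L)"
    using pi_norm_pos pi_weight_nonneg
    by (intro nn_integral_cong) (simp add: T_def nn_integral_cmult nn_integral_pi_weight_trans_density
        ennreal_mult[symmetric] indicator_def)
  also have "\<dots> = emeasure PI A"
    unfolding pi_meas_eq_density by (rule emeasure_density[symmetric]) simp_all
  finally show "emeasure (PI \<bind> Ptrans_kernel) A = emeasure PI A" .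
qed

lemma bind_pi_meas_Ptrans: "PI \<bind> Pt = PI"
  using bind_Ptrans_eq_bind_Ptrans_kernel[OF sets_pi_meas _ AE_pi_meas_hcdom] bind_pi_meas_Ptrans_kernel
    space_pi_meas hcdom_in_space far_point_in_hcdom
  by auto

lemma kernel_pow_Ptrans_eq:
  assumes "doeblin L S Ptrans_kernel minorant \<epsilon>" and z: "z \<in> S"
  shows "kernel_pow L Pt n z = kernel_pow L Ptrans_kernel n z"
proof (induction n)
  case (Suc n)
  interpret doeblin L S Ptrans_kernel minorant \<epsilon> by fact
  have "prob_space (kernel_pow L Ptrans_kernel n z)" "AE x in kernel_pow L Ptrans_kernel n z. x \<in> S"
    using prob_space_kernel_pow_AE_in_S[OF z] by auto
  then show ?case
    using Suc bind_Ptrans_eq_bind_Ptrans_kernel[OF sets_kernel_pow prob_space.not_empty] z hcdom_in_space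
    by simp
qed simp

lemma geometric_ergodicity:
  "prob_space PI \<and> PI \<bind> Pt = PI \<and>
   (\<exists>q::real. 0 < q \<and> q < 1 \<and>
      (\<exists>C :: (nat \<Rightarrow> real) \<Rightarrow> real. \<forall>z\<in>S. \<forall>n::nat. tv_dist (kernel_pow L Pt n z) PI \<le> C z * q ^ n))"
proof -
  obtain \<epsilon> where D: "doeblin L S Ptrans_kernel minorant \<epsilon>" using doeblin_Ptrans_kernel by blast
  interpret doeblin_invariant L S Ptrans_kernel minorant \<epsilon> PI
    by (rule doeblin_invariant.intro[OF D doeblin_invariant_axioms.intro])
      (simp_all add: prob_space_pi_meas sets_pi_meas AE_pi_meas_hcdom bind_pi_meas_Ptrans_kernel)
  have "tv_dist (kernel_pow L Pt n z) PI \<le> 1 * (1 - \<epsilon>) ^ n" if "z \<in> S" for z n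
    using tv_dist_kernel_pow_le[OF that] kernel_pow_Ptrans_eq[OF D that] by simp
  then show ?thesis using prob_space_pi_meas bind_pi_meas_Ptrans \<epsilon>_pos \<epsilon>_less_1
    by (intro conjI exI[of _ "1 - \<epsilon>"] exI[of _ "\<lambda>_. 1"]) auto
qed

end

theorem lemma6p2:
  fixes v :: "real \<Rightarrow> ereal" and rhc R \<beta> p lam0 :: real and m :: nat
    and \<phi> :: "(nat \<Rightarrow> real) \<Rightarrow> real"
  assumes v_meas: "v \<in> borel_measurable borel"
    and rhc_pos: "rhc > 0"
    and hard_core: "\<forall>r. 0 \<le> r \<and> r \<le> rhc \<longrightarrow> v r = \<infinity>"
    and finite_range: "\<forall>r. R \<le> r \<longrightarrow> v r = 0"
    and v_finite: "\<forall>r. rhc < r \<and> r \<le> R \<longrightarrow> \<bar>v r\<bar> \<noteq> \<infinity>"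
    and v_bdd_below: "\<exists>c::real. \<forall>r. rhc < r \<and> r \<le> R \<longrightarrow> ereal c \<le> v r"
    and m_ge: "m \<ge> 2"
    and R_lt: "R < real (m + 1) * rhc"
    and beta_pos: "\<beta> > 0" and p_pos: "p > 0"
    \<comment> \<open>phi is a strictly positive normalised eigenfunction for lambda0 > 0\<close>
    and lam_pos: "lam0 > 0"
    and phi_meas: "\<phi> \<in> borel_measurable (Lmeas (m - 1))"
    and phi_pos: "\<forall>z\<in>hcdom (m - 1) rhc. \<phi> z > 0"
    and phi_L2: "set_integrable (Lmeas (m - 1)) (hcdom (m - 1) rhc) (\<lambda>z. (\<phi> z)\<^sup>2)"
    and phi_norm: "(LINT z:hcdom (m - 1) rhc|Lmeas (m - 1). (\<phi> z)\<^sup>2) = 1"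
    and phi_eigen: "\<forall>z\<in>hcdom (m - 1) rhc.
          set_integrable (Lmeas (m - 1)) (hcdom (m - 1) rhc) (\<lambda>z'. Kker v \<beta> p (m - 1) z z' * \<phi> z') \<and>
          (LINT z':hcdom (m - 1) rhc|Lmeas (m - 1). Kker v \<beta> p (m - 1) z z' * \<phi> z') = lam0 * \<phi> z"
    \<comment> \<open>lambda0 is the dominant eigenvalue\<close>
    and lam_dominant: "\<forall>\<mu>. is_eigenvalue_K v \<beta> p (m - 1) rhc \<mu> \<longrightarrow> cmod \<mu> \<le> lam0"
  shows "prob_space (pi_meas (m - 1) rhc \<phi>)
    \<and> bind (pi_meas (m - 1) rhc \<phi>) (Ptrans v \<beta> p (m - 1) rhc lam0 \<phi>) = pi_meas (m - 1) rhc \<phi>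
    \<and> (\<exists>q::real. 0 < q \<and> q < 1 \<and>
         (\<exists>C :: (nat \<Rightarrow> real) \<Rightarrow> real. \<forall>z\<in>hcdom (m - 1) rhc. \<forall>n::nat.
            tv_dist (kernel_pow (Lmeas (m - 1)) (Ptrans v \<beta> p (m - 1) rhc lam0 \<phi>) n z)
                    (pi_meas (m - 1) rhc \<phi>) \<le> C z * q ^ n))"
proof -
  interpret hard_core_chain v rhc R \<beta> p lam0 "m - 1" \<phi>
    by unfold_locales (use assms in auto)
  show ?thesis by (rule geometric_ergodicity)
qed

end
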